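(* For all integers $n\ge1$ and $0\le l\le n-1$, $$\frac{N_l^{(n)}}{n}=\frac{B_l^{(n+l)}}{n+l}.$$
   Context: The Narumi numbers $N_l^{(a)}$ are defined by $\left(\frac{\log(1+t)}{t}\right)^a=\sum_{l\ge0}N_l^{(a)}\frac{t^l}{l!}$. The Bernoulli numbers of order $a$ are $B_l^{(a)}=B_l^{(a)}(0)$, where $\left(\frac{t}{e^t-1}\right)^a e^{xt}=\sum_{l\ge0}B_l^{(a)}(x)\frac{t^l}{l!}$. *)

theory Defs
  imports "HOL-Computational_Algebra.Formal_Power_Series"
begin

text \<open>Narumi numbers: (log(1+t)/t)^a = sum_l N_l^(a) t^l / l!.
  fps_ln 1 is the series of log(1+t); fps_shift 1 divides by t.\<close>
definition narumi :: "nat \<Rightarrow> nat \<Rightarrow> real" where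
  "narumi a l = fact l * fps_nth ((fps_shift 1 (fps_ln 1 :: real fps)) ^ a) l"

definition bernoulli_order :: "nat \<Rightarrow> nat \<Rightarrow> real" where
  "bernoulli_order a l = fact l * fps_nth ((fps_X / (fps_exp 1 - 1) :: real fps) ^ a) l"

end

theory Submission
  imports Defs
begin

text \<open>
  Write \<lambda>(t) = log(1+t)/t and \<beta>(t) = (e^t - 1)/t, so that the two sides are
  [t^l] \<lambda>^n / n and [t^l] \<beta>^-(n+l) / (n+l) up to the common factor l!.
  From e^log(1+t) - 1 = t we get \<beta>(t \<lambda>(t)) = 1 / \<lambda>(t).  Lagrange inversion
  [t^m] P = [t^m] \<lambda>^-(m+1) P(t\<lambda>) (t\<lambda>)' for P = \<beta>^-(n+l) and m = l gives
  [t^l] \<beta>^-(n+l) = [t^l] \<lambda>^(n-1) (t\<lambda>)', and n \<lambda>^(n-1) (t\<lambda>)' = n \<lambda>^n + t (\<lambda>^n)'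
  has l-th coefficient (n+l) [t^l] \<lambda>^n.
\<close>

unbundle fps_syntax

lemma fps_deriv_inverse_power:
  fixes F :: "'a::field fps"
  assumes "F $ 0 \<noteq> 0"
  shows "fps_deriv (inverse F ^ r) = - (fps_const (of_nat r) * fps_deriv F * inverse F ^ Suc r)"
proof (cases r)
  case (Suc k)
  have "fps_deriv (inverse F ^ r) = - (fps_const (of_nat r) * fps_deriv F * ((inverse F)\<^sup>2 * inverse F ^ k))"
    unfolding fps_deriv_power fps_inverse_deriv[OF assms] Suc diff_Suc_1
    by (simp only: mult_minus_left mult_minus_right mult.assoc)
  also have "(inverse F)\<^sup>2 * inverse F ^ k = inverse F ^ Suc r"
    using Suc by (simp add: power_add[symmetric])
  finally show ?thesis .
qed simp

text \<open>For r > 0 the series is H - t H'/r with H = F^-r, whose r-th coefficient vanishes.\<close>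

lemma coeff_inverse_power_Suc_mult_deriv:
  fixes F :: "'a::field_char_0 fps"
  assumes "F $ 0 \<noteq> 0"
  shows "(inverse F ^ Suc r * fps_deriv (fps_X * F)) $ r = (if r = 0 then 1 else 0)"
proof (cases r)
  case 0
  then show ?thesis using assms by (simp add: fps_mult_nth)
next
  case (Suc k)
  define H where "H = inverse F ^ r"
  have "inverse F ^ Suc r * fps_deriv (fps_X * F) = H * (inverse F * F) + fps_X * fps_deriv F * inverse F ^ Suc r"
    by (simp add: H_def algebra_simps)
  also have "inverse F * F = 1"
    using assms by (simp add: inverse_mult_eq_1)
  finally have eq: "inverse F ^ Suc r * fps_deriv (fps_X * F) = H + fps_X * fps_deriv F * inverse F ^ Suc r"
    by simp
  have "fps_const (of_nat r) * (inverse F ^ Suc r * fps_deriv (fps_X * F))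
      = fps_const (of_nat r) * H - fps_X * fps_deriv H"
    unfolding eq H_def fps_deriv_inverse_power[OF assms] by (simp add: algebra_simps)
  then have "of_nat r * (inverse F ^ Suc r * fps_deriv (fps_X * F)) $ r
      = of_nat r * H $ r - (fps_X * fps_deriv H) $ r"
    by (metis fps_mult_left_const_nth fps_sub_nth)
  also have "(fps_X * fps_deriv H) $ r = of_nat r * H $ r"
    using Suc by simp
  finally show ?thesis
    using Suc by (simp del: of_nat_Suc)
qed

lemma coeff_inverse_power_Suc_mult_power_deriv:
  fixes F :: "'a::field_char_0 fps"
  assumes "F $ 0 \<noteq> 0" and "i \<le> m"
  shows "(inverse F ^ Suc m * fps_deriv (fps_X * F) * (fps_X * F) ^ i) $ m = (if i = m then 1 else 0)"
proof -
  have "inverse F ^ Suc m * F ^ i = inverse F ^ Suc (m - i) * (inverse F * F) ^ i"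
    using assms(2) by (simp add: power_mult_distrib power_add[symmetric] mult.assoc)
  also have "inverse F * F = 1"
    using assms(1) by (simp add: inverse_mult_eq_1)
  finally have cancel: "inverse F ^ Suc m * F ^ i = inverse F ^ Suc (m - i)"
    by simp
  have "inverse F ^ Suc m * fps_deriv (fps_X * F) * (fps_X * F) ^ i
      = fps_X ^ i * (inverse F ^ Suc m * F ^ i * fps_deriv (fps_X * F))"
    by (simp only: power_mult_distrib mult_ac)
  also note cancel
  finally have "(inverse F ^ Suc m * fps_deriv (fps_X * F) * (fps_X * F) ^ i) $ m
      = (inverse F ^ Suc (m - i) * fps_deriv (fps_X * F)) $ (m - i)"
    using assms(2) by (simp only: fps_X_power_mult_nth) simp
  also have "\<dots> = (if i = m then 1 else 0)"
    unfolding coeff_inverse_power_Suc_mult_deriv[OF assms(1)] using assms(2) by auto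
  finally show ?thesis .
qed

lemma fps_nth_lagrange_inversion:
  fixes F P :: "'a::field_char_0 fps"
  assumes "F $ 0 \<noteq> 0"
  shows "P $ m = (inverse F ^ Suc m * (P oo (fps_X * F)) * fps_deriv (fps_X * F)) $ m"
proof -
  define f where "f = fps_X * F"
  \<comment> \<open>Up to order m, P oo f agrees with the truncation T, for which the claim is linear in the f^i.\<close>
  define T where "T = (\<Sum>i\<le>m. fps_const (P $ i) * f ^ i)"
  have "(f ^ i) $ r = 0" if "r < i" for i r
    using that by (simp add: f_def power_mult_distrib fps_X_power_mult_nth)
  then have "(P oo f) $ r = T $ r" if "r \<le> m" for r
    using that unfolding fps_compose_nth T_def fps_sum_nth fps_mult_left_const_nth
    by (intro sum.mono_neutral_left) auto
  then have cutoff: "fps_cutoff (Suc m) (P oo f) = fps_cutoff (Suc m) T"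
    by (simp add: fps_cutoff_eq_fps_cutoff_iff)
  have "(inverse F ^ Suc m * (P oo f) * fps_deriv f) $ m
      = (inverse F ^ Suc m * fps_deriv f * (P oo f)) $ m"
    by (simp only: mult_ac)
  also have "\<dots> = (inverse F ^ Suc m * fps_deriv f * fps_cutoff (Suc m) (P oo f)) $ m"
    by (rule fps_cutoff_right_mult_nth[symmetric]) simp
  also have "\<dots> = (\<Sum>i\<le>m. P $ i * (inverse F ^ Suc m * fps_deriv f * f ^ i) $ m)"
    unfolding cutoff fps_cutoff_right_mult_nth[OF lessI] T_def sum_distrib_left fps_sum_nth
      mult.left_commute[of _ "fps_const _"] fps_mult_left_const_nth ..
  also have "\<dots> = (\<Sum>i\<le>m. if i = m then P $ i else 0)"
    unfolding f_def
    by (intro sum.cong refl) (subst coeff_inverse_power_Suc_mult_power_deriv[OF assms]; simp)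
  also have "\<dots> = P $ m"
    by simp
  finally show ?thesis
    by (simp add: f_def)
qed

lemma coeff_power_pred_mult_deriv_X_mult:
  fixes F :: "'a::comm_ring_1 fps"
  assumes "n \<ge> 1"
  shows "of_nat n * (F ^ (n - 1) * fps_deriv (fps_X * F)) $ l = of_nat (n + l) * (F ^ n) $ l"
proof -
  obtain k where n: "n = Suc k"
    using assms by (cases n) auto
  have "fps_const (of_nat n) * (F ^ (n - 1) * fps_deriv (fps_X * F))
      = fps_const (of_nat n) * F ^ n + fps_X * fps_deriv (F ^ n)"
    unfolding fps_deriv_power n by (simp add: algebra_simps)
  then have "of_nat n * (F ^ (n - 1) * fps_deriv (fps_X * F)) $ l
      = of_nat n * (F ^ n) $ l + (fps_X * fps_deriv (F ^ n)) $ l"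
    by (metis fps_mult_left_const_nth fps_add_nth)
  also have "(fps_X * fps_deriv (F ^ n)) $ l = of_nat l * (F ^ n) $ l"
    by (cases l) (simp_all add: mult.commute)
  finally show ?thesis
    by (simp only: of_nat_add distrib_right)
qed

lemma coeff_inverse_power_eq_scaled_coeff_power:
  fixes F G :: "'a::field_char_0 fps"
  assumes F0: "F $ 0 \<noteq> 0" and compose: "inverse G oo (fps_X * F) = F" and "n \<ge> 1"
  shows "of_nat n * (inverse G ^ (n + l)) $ l = of_nat (n + l) * (F ^ n) $ l"
proof -
  have "inverse G ^ (n + l) oo (fps_X * F) = F ^ (n + l)"
    using fps_compose_power[of "fps_X * F" "inverse G" "n + l"] compose by simp
  then have "(inverse G ^ (n + l)) $ l = (inverse F ^ Suc l * F ^ (n + l) * fps_deriv (fps_X * F)) $ l"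
    using fps_nth_lagrange_inversion[OF F0, of "inverse G ^ (n + l)" l] by simp
  also have "inverse F ^ Suc l * F ^ (n + l) = (inverse F * F) ^ Suc l * F ^ (n - 1)"
  proof -
    have "n + l = Suc l + (n - 1)"
      using \<open>n \<ge> 1\<close> by simp
    then show ?thesis
      by (simp only: power_add power_mult_distrib mult_ac)
  qed
  also have "inverse F * F = 1"
    using F0 by (simp add: inverse_mult_eq_1)
  finally show ?thesis
    using coeff_power_pred_mult_deriv_X_mult[OF \<open>n \<ge> 1\<close>] by simp
qed

lemma inverse_compose_eq_if_compose_eq_X:
  fixes F G :: "'a::field fps"
  assumes compose: "(fps_X * G) oo (fps_X * F) = fps_X" and G0: "G $ 0 \<noteq> 0"
  shows "inverse G oo (fps_X * F) = F"
proof -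
  have "fps_X * (F * (G oo (fps_X * F))) = fps_X * 1"
    using compose by (simp add: fps_compose_mult_distrib mult.assoc)
  then have "F * (G oo (fps_X * F)) = 1"
    by simp
  then have "inverse (G oo (fps_X * F)) = F"
    by (intro fps_inverse_unique) (simp add: mult.commute)
  then show ?thesis
    using G0 by (simp add: fps_inverse_compose)
qed

lemma fps_X_mult_shift_1:
  fixes f :: "'a::comm_ring_1 fps"
  assumes "f $ 0 = 0"
  shows "fps_X * fps_shift 1 f = f"
  using assms by (intro fps_ext) (simp add: fps_X_mult_nth)

theorem corollary5:
  fixes n l :: nat
  assumes "n \<ge> 1" and "l \<le> n - 1"
  shows "narumi n l / real n = bernoulli_order (n + l) l / real (n + l)"
proof -
  define F where "F = fps_shift 1 (fps_ln 1 :: real fps)"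
  define G where "G = fps_shift 1 (fps_exp 1 - 1 :: real fps)"
  have ln: "fps_ln 1 = fps_X * F" and exp: "fps_exp 1 - 1 = fps_X * G"
    unfolding F_def G_def by (rule fps_X_mult_shift_1[symmetric], simp)+
  have F0: "F $ 0 \<noteq> 0" and G0: "G $ 0 \<noteq> 0"
    by (simp_all add: F_def G_def fps_ln_nth)
  have "(fps_exp 1 - 1) oo fps_ln 1 = (fps_X :: real fps)"
    using fps_inv_right[of "fps_exp 1 - 1 :: real fps"] by (simp add: fps_ln_fps_exp_inv)
  then have "(fps_X * G) oo (fps_X * F) = fps_X"
    by (simp only: ln exp)
  then have "inverse G oo (fps_X * F) = F"
    using G0 by (rule inverse_compose_eq_if_compose_eq_X)
  then have coeff: "real n * (inverse G ^ (n + l)) $ l = real (n + l) * (F ^ n) $ l"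
    using coeff_inverse_power_eq_scaled_coeff_power[OF F0 _ \<open>n \<ge> 1\<close>] by simp
  have "fps_X / (fps_exp 1 - 1) = inverse G"
    using G0 by (simp add: exp fps_divide_unit)
  then show ?thesis
    using coeff \<open>n \<ge> 1\<close> by (simp add: narumi_def bernoulli_order_def F_def field_simps)
qed

end
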